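(* Let $R=\mathbb{Z}[t]/(t^3)$ and, for $\operatorname{Re}(s)>1$, let $\zeta_R(s)=\sum_{S}[R:S]^{-s}$, where the sum runs over all subrings $S$ of $R$. (i) For every prime $p$, the $p$-part $\zeta_{R,p}(s)=\sum_{S:\,[R:S]\text{ a power of }p}[R:S]^{-s}$ satisfies, with $Z=p^{-s}$, \[ \zeta_{R,p}(s)=\frac{1+pZ^2}{(1-Z)(1-p^2Z^3)} . \] (ii) For $\operatorname{Re}(s)>1$, \[ \zeta_R(s)=\frac{\zeta(s)\,\zeta(2s-1)\,\zeta(3s-2)}{\zeta(4s-2)}, \] where $\zeta$ denotes the Riemann zeta function.
   Context: A subring $S$ of $R=\mathbb{Z}[t]/(t^3)$ means an additive subgroup of finite index that contains $1$ and is closed under multiplication. $[R:S]$ denotes the index of $S$ as an additive subgroup. *)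

theory Defs
  imports "HOL-Analysis.Analysis" "HOL-Computational_Algebra.Primes"
begin

text \<open>The ring R = Z[t]/(t^3), with the element a + b t + c t^2 represented
  as the triple (a, b, c) of integers (Z-basis 1, t, t^2).\<close>

type_synonym relt = "int \<times> int \<times> int"

definition radd :: "relt \<Rightarrow> relt \<Rightarrow> relt" where
  "radd x y = (case x of (a, b, c) \<Rightarrow> case y of (a', b', c') \<Rightarrow> (a + a', b + b', c + c'))"

definition rneg :: "relt \<Rightarrow> relt" where
  "rneg x = (case x of (a, b, c) \<Rightarrow> (- a, - b, - c))"

definition rzero :: relt where "rzero = (0, 0, 0)"

definition rone :: relt where "rone = (1, 0, 0)"

text \<open>(a + b t + c t^2)(a' + b' t + c' t^2) mod t^3\<close>
definition rmul :: "relt \<Rightarrow> relt \<Rightarrow> relt" where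
  "rmul x y = (case x of (a, b, c) \<Rightarrow> case y of (a', b', c') \<Rightarrow>
      (a * a', a * b' + b * a', a * c' + b * b' + c * a'))"

definition coset_rel :: "relt set \<Rightarrow> (relt \<times> relt) set" where
  "coset_rel S = {(x, y). radd x (rneg y) \<in> S}"

definition rindex :: "relt set \<Rightarrow> nat" where
  "rindex S = card (UNIV // coset_rel S)"

definition additive_subgroup :: "relt set \<Rightarrow> bool" where
  "additive_subgroup S \<longleftrightarrow> rzero \<in> S \<and> (\<forall>x\<in>S. \<forall>y\<in>S. radd x y \<in> S) \<and> (\<forall>x\<in>S. rneg x \<in> S)"

definition is_subring :: "relt set \<Rightarrow> bool" where
  "is_subring S \<longleftrightarrow> additive_subgroup S \<and> finite (UNIV // coset_rel S)
     \<and> rone \<in> S \<and> (\<forall>x\<in>S. \<forall>y\<in>S. rmul x y \<in> S)"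

text \<open>Riemann zeta function, via its Dirichlet series (valid for Re s > 1, which is
  the only range in which it is used).\<close>
definition rzeta :: "complex \<Rightarrow> complex" where
  "rzeta s = (\<Sum>n. of_nat (Suc n) powr (- s))"

end

theory Submission
  imports Defs "HOL-Computational_Algebra.Squarefree"
begin

text \<open>Every subring of \<open>\<int>[t]/(t\<^sup>3)\<close> has a unique basis \<open>1, \<alpha> t + \<beta> t\<^sup>2, \<gamma> t\<^sup>2\<close> in
  Hermite normal form (\<open>\<alpha>, \<gamma> > 0\<close>, \<open>0 \<le> \<beta> < \<gamma>\<close>); its index is \<open>\<alpha> \<gamma>\<close>, and closure under
  multiplication amounts to \<open>\<gamma> dvd \<alpha>\<^sup>2\<close>. Writing \<open>\<gamma> = w v\<^sup>2\<close> with \<open>w\<close> squarefree, this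
  says \<open>\<alpha> = u v w\<close>, so the subrings correspond to \<open>(u, v, w, \<beta>)\<close> with \<open>\<beta> < w v\<^sup>2\<close> and index
  \<open>u v\<^sup>3 w\<^sup>2\<close>. The Dirichlet series therefore factors as \<open>\<zeta>(s) \<zeta>(3s - 2)\<close> times the sum of
  \<open>w\<^sup>1\<^sup>-\<^sup>2\<^sup>s\<close> over squarefree \<open>w\<close>, which is \<open>\<zeta>(2s - 1) / \<zeta>(4s - 2)\<close>. Restricting \<open>u, v\<close> to
  powers of \<open>p\<close> and \<open>w\<close> to \<open>{1, p}\<close> gives the local factor as a product of two geometric
  series and a two-term sum.\<close>

section \<open>Hermite normal form of subrings\<close>

definition hnf_lattice :: "int \<Rightarrow> int \<Rightarrow> int \<Rightarrow> relt set" where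
  "hnf_lattice \<alpha> \<beta> \<gamma> = {(a, m * \<alpha>, m * \<beta> + n * \<gamma>) | a m n. True}"

lemma hnf_lattice_memI: "(a, m * \<alpha>, m * \<beta> + n * \<gamma>) \<in> hnf_lattice \<alpha> \<beta> \<gamma>"
  unfolding hnf_lattice_def by blast

lemma hnf_lattice_memE:
  assumes "x \<in> hnf_lattice \<alpha> \<beta> \<gamma>"
  obtains a m n where "x = (a, m * \<alpha>, m * \<beta> + n * \<gamma>)"
  using assms unfolding hnf_lattice_def by blast

lemma hnf_lattice_generators:
  "(1, 0, 0) \<in> hnf_lattice \<alpha> \<beta> \<gamma>" "(0, \<alpha>, \<beta>) \<in> hnf_lattice \<alpha> \<beta> \<gamma>" "(0, 0, \<gamma>) \<in> hnf_lattice \<alpha> \<beta> \<gamma>"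
  using hnf_lattice_memI[of 1 0 \<alpha> \<beta> 0 \<gamma>] hnf_lattice_memI[of 0 1 \<alpha> \<beta> 0 \<gamma>]
    hnf_lattice_memI[of 0 0 \<alpha> \<beta> 1 \<gamma>] by simp_all

lemma mem_hnf_lattice_iff:
  assumes "\<alpha> \<noteq> 0"
  shows "(a, b, c) \<in> hnf_lattice \<alpha> \<beta> \<gamma> \<longleftrightarrow> \<alpha> dvd b \<and> \<gamma> dvd c - b div \<alpha> * \<beta>"
proof
  assume "(a, b, c) \<in> hnf_lattice \<alpha> \<beta> \<gamma>"
  then obtain m n where "b = m * \<alpha>" "c = m * \<beta> + n * \<gamma>"
    unfolding hnf_lattice_def by blast
  with assms show "\<alpha> dvd b \<and> \<gamma> dvd c - b div \<alpha> * \<beta>" by simp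
next
  assume dvd: "\<alpha> dvd b \<and> \<gamma> dvd c - b div \<alpha> * \<beta>"
  then obtain m where m: "b = m * \<alpha>" by (metis dvd_def mult.commute)
  with assms dvd have "\<gamma> dvd c - m * \<beta>" by simp
  then obtain n where "c - m * \<beta> = n * \<gamma>" by (metis dvd_def mult.commute)
  with m have "b = m * \<alpha>" "c = m * \<beta> + n * \<gamma>" by (simp_all add: algebra_simps)
  then show "(a, b, c) \<in> hnf_lattice \<alpha> \<beta> \<gamma>" unfolding hnf_lattice_def by blast
qed

lemma hnf_lattice_shift: "hnf_lattice \<alpha> (\<beta> + k * \<gamma>) \<gamma> = hnf_lattice \<alpha> \<beta> \<gamma>"
proof -
  have "m * (\<beta> + k * \<gamma>) + n * \<gamma> = m * \<beta> + (n + m * k) * \<gamma>"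
    "m * \<beta> + n * \<gamma> = m * (\<beta> + k * \<gamma>) + (n - m * k) * \<gamma>" for m n :: int
    by (simp_all add: algebra_simps)
  then show ?thesis unfolding hnf_lattice_def by blast
qed

lemma hnf_lattice_mod: "hnf_lattice \<alpha> (\<beta> mod \<gamma>) \<gamma> = hnf_lattice \<alpha> \<beta> \<gamma>"
  using hnf_lattice_shift[of \<alpha> "\<beta> mod \<gamma>" "\<beta> div \<gamma>" \<gamma>] by simp

lemma bij_betw_fibres_quotient:
  "bij_betw (\<lambda>k. f -` {k}) (range f) (UNIV // {(x, y). f x = f y})"
proof (rule bij_betw_imageI)
  show "inj_on (\<lambda>k. f -` {k}) (range f)" by (auto simp: inj_on_def)
  have "{(x, y). f x = f y} `` {x} = f -` {f x}" for x by auto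
  then show "(\<lambda>k. f -` {k}) ` range f = UNIV // {(x, y). f x = f y}"
    unfolding quotient_def by auto
qed

definition hnf_residue :: "int \<Rightarrow> int \<Rightarrow> int \<Rightarrow> relt \<Rightarrow> int \<times> int" where
  "hnf_residue \<alpha> \<beta> \<gamma> x = (case x of (a, b, c) \<Rightarrow> (b mod \<alpha>, (c - b div \<alpha> * \<beta>) mod \<gamma>))"

lemma coset_rel_hnf_lattice:
  assumes "\<alpha> > 0"
  shows "coset_rel (hnf_lattice \<alpha> \<beta> \<gamma>) = {(x, y). hnf_residue \<alpha> \<beta> \<gamma> x = hnf_residue \<alpha> \<beta> \<gamma> y}"
proof -
  have a0: "\<alpha> \<noteq> 0" using assms by simp
  have "(a - a', b - b', c - c') \<in> hnf_lattice \<alpha> \<beta> \<gamma> \<longleftrightarrow>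
    hnf_residue \<alpha> \<beta> \<gamma> (a, b, c) = hnf_residue \<alpha> \<beta> \<gamma> (a', b', c')" for a b c a' b' c'
  proof (cases "b mod \<alpha> = b' mod \<alpha>")
    case True
    then have "b - b' = \<alpha> * (b div \<alpha> - b' div \<alpha>)"
      by (metis mod_mult_div_eq right_diff_distrib add_diff_cancel_left)
    then have d: "(b - b') div \<alpha> = b div \<alpha> - b' div \<alpha>" and dvd: "\<alpha> dvd b - b'"
      using assms by simp_all
    then have eq: "c - c' - (b - b') div \<alpha> * \<beta> = (c - b div \<alpha> * \<beta>) - (c' - b' div \<alpha> * \<beta>)"
      unfolding d by (simp add: algebra_simps)
    have "(a - a', b - b', c - c') \<in> hnf_lattice \<alpha> \<beta> \<gamma> \<longleftrightarrow>
        \<gamma> dvd (c - b div \<alpha> * \<beta>) - (c' - b' div \<alpha> * \<beta>)"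
      using dvd unfolding mem_hnf_lattice_iff[OF a0] eq by simp
    with True show ?thesis by (simp add: hnf_residue_def mod_eq_dvd_iff)
  next
    case False
    then show ?thesis using assms by (simp add: mem_hnf_lattice_iff hnf_residue_def mod_eq_dvd_iff)
  qed
  then show ?thesis unfolding coset_rel_def by (auto simp: radd_def rneg_def)
qed

lemma range_hnf_residue:
  assumes "\<alpha> > 0" "\<gamma> > 0"
  shows "range (hnf_residue \<alpha> \<beta> \<gamma>) = {0..<\<alpha>} \<times> {0..<\<gamma>}"
proof
  show "range (hnf_residue \<alpha> \<beta> \<gamma>) \<subseteq> {0..<\<alpha>} \<times> {0..<\<gamma>}"
    using assms by (auto simp: hnf_residue_def split: prod.splits)
  show "{0..<\<alpha>} \<times> {0..<\<gamma>} \<subseteq> range (hnf_residue \<alpha> \<beta> \<gamma>)"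
  proof safe
    fix i j assume "i \<in> {0..<\<alpha>}" "j \<in> {0..<\<gamma>}"
    then have "hnf_residue \<alpha> \<beta> \<gamma> (0, i, j) = (i, j)" by (simp add: hnf_residue_def)
    then show "(i, j) \<in> range (hnf_residue \<alpha> \<beta> \<gamma>)" by (metis rangeI)
  qed
qed

lemma rindex_hnf_lattice:
  assumes "\<alpha> > 0" "\<gamma> > 0"
  shows "rindex (hnf_lattice \<alpha> \<beta> \<gamma>) = nat \<alpha> * nat \<gamma>"
    and "finite (UNIV // coset_rel (hnf_lattice \<alpha> \<beta> \<gamma>))"
proof -
  have bij: "bij_betw (\<lambda>k. hnf_residue \<alpha> \<beta> \<gamma> -` {k}) ({0..<\<alpha>} \<times> {0..<\<gamma>})
      (UNIV // coset_rel (hnf_lattice \<alpha> \<beta> \<gamma>))"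
    using bij_betw_fibres_quotient[of "hnf_residue \<alpha> \<beta> \<gamma>"]
    unfolding coset_rel_hnf_lattice[OF assms(1)] range_hnf_residue[OF assms] .
  show "rindex (hnf_lattice \<alpha> \<beta> \<gamma>) = nat \<alpha> * nat \<gamma>"
    unfolding rindex_def bij_betw_same_card[OF bij, symmetric] by (simp add: card_cartesian_product)
  show "finite (UNIV // coset_rel (hnf_lattice \<alpha> \<beta> \<gamma>))"
    using bij_betw_finite[OF bij] by simp
qed

lemma additive_subgroup_hnf_lattice: "additive_subgroup (hnf_lattice \<alpha> \<beta> \<gamma>)"
proof -
  have "radd x y \<in> hnf_lattice \<alpha> \<beta> \<gamma>"
    if x: "x \<in> hnf_lattice \<alpha> \<beta> \<gamma>" and y: "y \<in> hnf_lattice \<alpha> \<beta> \<gamma>" for x y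
  proof -
    obtain a m n where "x = (a, m * \<alpha>, m * \<beta> + n * \<gamma>)"
      using x by (rule hnf_lattice_memE)
    moreover obtain a' m' n' where "y = (a', m' * \<alpha>, m' * \<beta> + n' * \<gamma>)"
      using y by (rule hnf_lattice_memE)
    ultimately have "radd x y = (a + a', (m + m') * \<alpha>, (m + m') * \<beta> + (n + n') * \<gamma>)"
      unfolding radd_def by (simp add: algebra_simps)
    then show ?thesis by (simp only: hnf_lattice_memI)
  qed
  moreover have "rneg x \<in> hnf_lattice \<alpha> \<beta> \<gamma>" if x: "x \<in> hnf_lattice \<alpha> \<beta> \<gamma>" for x
  proof -
    obtain a m n where "x = (a, m * \<alpha>, m * \<beta> + n * \<gamma>)"
      using x by (rule hnf_lattice_memE)
    then have "rneg x = (- a, (- m) * \<alpha>, (- m) * \<beta> + (- n) * \<gamma>)"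
      unfolding rneg_def by simp
    then show ?thesis by (simp only: hnf_lattice_memI)
  qed
  moreover have "rzero \<in> hnf_lattice \<alpha> \<beta> \<gamma>"
    using hnf_lattice_memI[of 0 0 \<alpha> \<beta> 0 \<gamma>] by (simp add: rzero_def)
  ultimately show ?thesis unfolding additive_subgroup_def by blast
qed

text \<open>The generator \<open>\<alpha> t + \<beta> t\<^sup>2\<close> squares to \<open>\<alpha>\<^sup>2 t\<^sup>2\<close>, so closure under multiplication
  amounts to \<open>\<gamma> dvd \<alpha>\<^sup>2\<close>.\<close>
lemma rmul_mem_hnf_lattice:
  assumes "\<gamma> dvd \<alpha>\<^sup>2" "x \<in> hnf_lattice \<alpha> \<beta> \<gamma>" "y \<in> hnf_lattice \<alpha> \<beta> \<gamma>"
  shows "rmul x y \<in> hnf_lattice \<alpha> \<beta> \<gamma>"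
proof -
  obtain k where k: "\<alpha>\<^sup>2 = k * \<gamma>" using assms(1) by (metis dvd_def mult.commute)
  obtain a m n where x: "x = (a, m * \<alpha>, m * \<beta> + n * \<gamma>)"
    using assms(2) by (rule hnf_lattice_memE)
  obtain a' m' n' where y: "y = (a', m' * \<alpha>, m' * \<beta> + n' * \<gamma>)"
    using assms(3) by (rule hnf_lattice_memE)
  have "a * (m' * \<beta> + n' * \<gamma>) + m * \<alpha> * (m' * \<alpha>) + (m * \<beta> + n * \<gamma>) * a' =
      (a * m' + m * a') * \<beta> + (a * n' + m * m' * k + n * a') * \<gamma>"
    using k by algebra
  moreover have "a * (m' * \<alpha>) + m * \<alpha> * a' = (a * m' + m * a') * \<alpha>" by algebra
  ultimately have "rmul x y = (a * a', (a * m' + m * a') * \<alpha>,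
      (a * m' + m * a') * \<beta> + (a * n' + m * m' * k + n * a') * \<gamma>)"
    unfolding x y rmul_def prod.case by simp
  then show ?thesis by (simp only: hnf_lattice_memI)
qed

lemma is_subring_hnf_lattice_iff:
  assumes "\<alpha> > 0" "\<gamma> > 0"
  shows "is_subring (hnf_lattice \<alpha> \<beta> \<gamma>) \<longleftrightarrow> \<gamma> dvd \<alpha>\<^sup>2"
proof
  assume "is_subring (hnf_lattice \<alpha> \<beta> \<gamma>)"
  with hnf_lattice_generators(2) have "rmul (0, \<alpha>, \<beta>) (0, \<alpha>, \<beta>) \<in> hnf_lattice \<alpha> \<beta> \<gamma>"
    unfolding is_subring_def by blast
  then have "(0, 0, \<alpha>\<^sup>2) \<in> hnf_lattice \<alpha> \<beta> \<gamma>" by (simp add: rmul_def power2_eq_square)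
  then obtain m n where "0 = m * \<alpha>" "\<alpha>\<^sup>2 = m * \<beta> + n * \<gamma>"
    unfolding hnf_lattice_def by blast
  with assms show "\<gamma> dvd \<alpha>\<^sup>2" by simp
next
  assume "\<gamma> dvd \<alpha>\<^sup>2"
  then show "is_subring (hnf_lattice \<alpha> \<beta> \<gamma>)"
    unfolding is_subring_def using additive_subgroup_hnf_lattice rmul_mem_hnf_lattice
      rindex_hnf_lattice(2)[OF assms] hnf_lattice_generators(1) by (simp add: rone_def)
qed

lemma hnf_lattice_inject:
  assumes "\<alpha> > 0" "0 \<le> \<beta>" "\<beta> < \<gamma>" "\<alpha>' > 0" "0 \<le> \<beta>'" "\<beta>' < \<gamma>'"
    and eq: "hnf_lattice \<alpha> \<beta> \<gamma> = hnf_lattice \<alpha>' \<beta>' \<gamma>'"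
  shows "\<alpha> = \<alpha>' \<and> \<beta> = \<beta>' \<and> \<gamma> = \<gamma>'"
proof -
  have "(0, \<alpha>, \<beta>) \<in> hnf_lattice \<alpha>' \<beta>' \<gamma>'" "(0, 0, \<gamma>) \<in> hnf_lattice \<alpha>' \<beta>' \<gamma>'"
    unfolding eq[symmetric] by (fact hnf_lattice_generators)+
  moreover have "(0, \<alpha>', \<beta>') \<in> hnf_lattice \<alpha> \<beta> \<gamma>" "(0, 0, \<gamma>') \<in> hnf_lattice \<alpha> \<beta> \<gamma>"
    unfolding eq by (fact hnf_lattice_generators)+
  ultimately obtain m n m' p q p' q' where
    \<alpha>\<beta>: "\<alpha> = m * \<alpha>'" "\<beta> = m * \<beta>' + n * \<gamma>'" "\<alpha>' = m' * \<alpha>" and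
    \<gamma>\<gamma>: "0 = p * \<alpha>'" "\<gamma> = p * \<beta>' + q * \<gamma>'" "0 = p' * \<alpha>" "\<gamma>' = p' * \<beta> + q' * \<gamma>"
    unfolding hnf_lattice_def by blast
  from \<alpha>\<beta>(1,3) have "\<alpha>' dvd \<alpha>" "\<alpha> dvd \<alpha>'" by (metis dvd_triv_right)+
  with assms(1,4) have \<alpha>: "\<alpha> = \<alpha>'" by (simp add: zdvd_antisym_nonneg)
  with \<alpha>\<beta>(1) assms(1) have "m = 1" by simp
  with \<alpha>\<beta>(2) have \<beta>: "\<beta> = \<beta>' + n * \<gamma>'" by simp
  from \<gamma>\<gamma>(1,3) assms(1,4) have "p = 0" "p' = 0" by simp_all
  then have "\<gamma>' dvd \<gamma>" "\<gamma> dvd \<gamma>'" using \<gamma>\<gamma>(2,4) by (metis add_0 mult_zero_left dvd_triv_right)+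
  then have \<gamma>: "\<gamma> = \<gamma>'" using assms(2,3,5,6) by (intro zdvd_antisym_nonneg) auto
  with \<beta> have "\<beta> mod \<gamma> = \<beta>' mod \<gamma>" by simp
  with assms(2,3,5,6) \<gamma> have "\<beta> = \<beta>'" by (simp add: mod_pos_pos_trivial)
  with \<alpha> \<gamma> show ?thesis by simp
qed

lemma additive_subgroup_smult:
  assumes "additive_subgroup S" "(a, b, c) \<in> S"
  shows "(k * a, k * b, k * c) \<in> S"
proof -
  have nat: "(int n * a, int n * b, int n * c) \<in> S" for n
  proof (induction n)
    case 0
    then show ?case using assms(1) unfolding additive_subgroup_def rzero_def by simp
  next
    case (Suc n)
    with assms have "radd (int n * a, int n * b, int n * c) (a, b, c) \<in> S"
      unfolding additive_subgroup_def by blast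
    then show ?case by (simp add: radd_def algebra_simps)
  qed
  show ?thesis
  proof (cases "k \<ge> 0")
    case True
    then show ?thesis using nat[of "nat k"] by simp
  next
    case False
    with nat[of "nat (- k)"] assms(1) have "rneg (- k * a, - k * b, - k * c) \<in> S"
      unfolding additive_subgroup_def by simp
    then show ?thesis by (simp add: rneg_def)
  qed
qed

lemma additive_subgroup_lincomb:
  assumes "additive_subgroup S" "(a, b, c) \<in> S" "(a', b', c') \<in> S"
  shows "(k * a + l * a', k * b + l * b', k * c + l * c') \<in> S"
  using assms additive_subgroup_smult[OF assms(1,2), of k] additive_subgroup_smult[OF assms(1,3), of l]
  unfolding additive_subgroup_def radd_def by fastforce

text \<open>Pigeonhole on the cosets of the multiples of an element.\<close>
lemma finite_index_multiple_mem:
  assumes "additive_subgroup S" "finite (UNIV // coset_rel S)"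
  shows "\<exists>k>0. (k * a, k * b, k * c) \<in> S"
proof -
  define x where "x n = (int n * a, int n * b, int n * c)" for n
  have "(\<lambda>n. coset_rel S `` {x n}) ` UNIV \<subseteq> UNIV // coset_rel S"
    unfolding quotient_def by blast
  with assms(2) have "\<not> inj (\<lambda>n. coset_rel S `` {x n})"
    using finite_imageD finite_subset infinite_UNIV_nat by blast
  then obtain i j where "i < j" "coset_rel S `` {x i} = coset_rel S `` {x j}"
    unfolding inj_def by (metis linorder_neqE_nat)
  moreover have "(x i, x i) \<in> coset_rel S"
    using assms(1) unfolding coset_rel_def additive_subgroup_def
    by (simp add: x_def radd_def rneg_def rzero_def)
  ultimately have "(x j, x i) \<in> coset_rel S" by blast
  then have "((int j - int i) * a, (int j - int i) * b, (int j - int i) * c) \<in> S"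
    unfolding coset_rel_def x_def radd_def rneg_def by (simp add: algebra_simps)
  with \<open>i < j\<close> show ?thesis by (intro exI[of _ "int j - int i"]) simp
qed

lemma hnf_lattice_subset:
  assumes "additive_subgroup S" "(1, 0, 0) \<in> S" "(0, \<alpha>, \<beta>) \<in> S" "(0, 0, \<gamma>) \<in> S"
  shows "hnf_lattice \<alpha> \<beta> \<gamma> \<subseteq> S"
proof
  fix x assume "x \<in> hnf_lattice \<alpha> \<beta> \<gamma>"
  then obtain a m n where x: "x = (a, m * \<alpha>, m * \<beta> + n * \<gamma>)" by (rule hnf_lattice_memE)
  from additive_subgroup_lincomb[OF assms(1,3,4), of m n]
  have "(0, m * \<alpha>, m * \<beta> + n * \<gamma>) \<in> S" by simp
  from additive_subgroup_lincomb[OF assms(1) this assms(2), of 1 a]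
  show "x \<in> S" unfolding x by simp
qed

text \<open>Subtracting multiples of the generators leaves remainders modulo \<open>\<alpha>\<close> and \<open>\<gamma>\<close> in \<open>S\<close>,
  which vanish by minimality.\<close>
lemma subset_hnf_lattice:
  assumes S: "additive_subgroup S" "(1, 0, 0) \<in> S" "(0, \<alpha>, \<beta>) \<in> S" "(0, 0, \<gamma>) \<in> S"
    and pos: "\<alpha> > 0" "\<gamma> > 0"
    and \<alpha>_least: "\<And>b c. (0, b, c) \<in> S \<Longrightarrow> 0 < b \<Longrightarrow> \<alpha> \<le> b"
    and \<gamma>_least: "\<And>c. (0, 0, c) \<in> S \<Longrightarrow> 0 < c \<Longrightarrow> \<gamma> \<le> c"
  shows "S \<subseteq> hnf_lattice \<alpha> \<beta> \<gamma>"
proof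
  fix x assume "x \<in> S"
  obtain a b c where x: "x = (a, b, c)" by (cases x)
  from additive_subgroup_lincomb[OF S(1) \<open>x \<in> S\<close>[unfolded x] S(2), of 1 "- a"]
  have bc: "(0, b, c) \<in> S" by simp
  define c' where "c' = c - b div \<alpha> * \<beta>"
  from additive_subgroup_lincomb[OF S(1) bc S(3), of 1 "- (b div \<alpha>)"]
  have bc': "(0, b mod \<alpha>, c') \<in> S" by (simp add: c'_def minus_mult_div_eq_mod algebra_simps)
  with \<alpha>_least pos have b: "b mod \<alpha> = 0"
    using pos_mod_sign[of \<alpha> b] pos_mod_bound[of \<alpha> b] by fastforce
  from additive_subgroup_lincomb[OF S(1) bc' S(4), of 1 "- (c' div \<gamma>)"]
  have "(0, 0, c' mod \<gamma>) \<in> S" by (simp add: b minus_mult_div_eq_mod minus_div_mult_eq_mod algebra_simps)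
  with \<gamma>_least pos have "c' mod \<gamma> = 0"
    using pos_mod_sign[of \<gamma> c'] pos_mod_bound[of \<gamma> c'] by fastforce
  with b pos show "x \<in> hnf_lattice \<alpha> \<beta> \<gamma>"
    unfolding x c'_def by (simp add: mem_hnf_lattice_iff mod_eq_0_iff_dvd)
qed

lemma least_positive_int:
  assumes "P k" "k > (0::int)"
  shows "\<exists>m. P m \<and> m > 0 \<and> (\<forall>n. P n \<longrightarrow> n > 0 \<longrightarrow> m \<le> n)"
proof -
  define N where "N = (LEAST n::nat. n > 0 \<and> P (int n))"
  have "nat k > 0 \<and> P (int (nat k))" using assms by simp
  then have "N > 0 \<and> P (int N)" unfolding N_def by (rule LeastI)
  moreover have "int N \<le> n" if "P n" "n > 0" for n
    using that Least_le[of "\<lambda>n. n > 0 \<and> P (int n)" "nat n"] unfolding N_def by simp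
  ultimately show ?thesis by auto
qed

theorem subring_eq_hnf_lattice:
  assumes "is_subring S"
  obtains \<alpha> \<beta> \<gamma> where "\<alpha> > 0" "\<gamma> > 0" "0 \<le> \<beta>" "\<beta> < \<gamma>" "S = hnf_lattice \<alpha> \<beta> \<gamma>"
proof -
  have S: "additive_subgroup S" "finite (UNIV // coset_rel S)" "(1, 0, 0) \<in> S"
    using assms unfolding is_subring_def rone_def by auto
  obtain k l where "k > 0" "(0, 0, k) \<in> S" "l > 0" "(0, l, 0) \<in> S"
    using finite_index_multiple_mem[OF S(1,2), of 0 0 1]
      finite_index_multiple_mem[OF S(1,2), of 0 1 0] by auto
  obtain \<gamma> where \<gamma>: "(0, 0, \<gamma>) \<in> S" "\<gamma> > 0" "\<forall>c. (0, 0, c) \<in> S \<longrightarrow> 0 < c \<longrightarrow> \<gamma> \<le> c"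
    using least_positive_int[of "\<lambda>c. (0, 0, c) \<in> S", OF \<open>(0, 0, k) \<in> S\<close> \<open>k > 0\<close>] by blast
  obtain \<alpha> \<beta>' where \<alpha>: "(0, \<alpha>, \<beta>') \<in> S" "\<alpha> > 0" "\<forall>b c. (0, b, c) \<in> S \<longrightarrow> 0 < b \<longrightarrow> \<alpha> \<le> b"
    using least_positive_int[of "\<lambda>b. \<exists>c. (0, b, c) \<in> S" l] \<open>(0, l, 0) \<in> S\<close> \<open>l > 0\<close> by blast
  have "S \<subseteq> hnf_lattice \<alpha> \<beta>' \<gamma>"
    by (rule subset_hnf_lattice[OF S(1,3) \<alpha>(1) \<gamma>(1) \<alpha>(2) \<gamma>(2)]) (use \<alpha>(3) \<gamma>(3) in blast)+
  with hnf_lattice_subset[OF S(1,3) \<alpha>(1) \<gamma>(1)] have "S = hnf_lattice \<alpha> \<beta>' \<gamma>" by blast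
  then have "S = hnf_lattice \<alpha> (\<beta>' mod \<gamma>) \<gamma>" by (simp only: hnf_lattice_mod)
  show ?thesis
    by (rule that[OF \<alpha>(2) \<gamma>(2) _ _ \<open>S = hnf_lattice \<alpha> (\<beta>' mod \<gamma>) \<gamma>\<close>]) (simp_all add: \<gamma>(2))
qed

section \<open>Squarefree decomposition\<close>

lemma squarefree_imp_pos: "squarefree (n :: nat) \<Longrightarrow> n > 0"
  by (cases n) auto

lemma squarefree_square_decomposition_unique:
  fixes w v w' v' :: nat
  assumes "squarefree w" "squarefree w'" "v > 0" "v' > 0" "w * v\<^sup>2 = w' * v'\<^sup>2"
  shows "w = w' \<and> v = v'"
proof -
  have nz: "w \<noteq> 0" "w' \<noteq> 0" using assms(1,2) squarefree_imp_pos by blast+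
  have "multiplicity p w = multiplicity p w' \<and> multiplicity p v = multiplicity p v'" if p: "prime p" for p
  proof -
    have "multiplicity p w + 2 * multiplicity p v = multiplicity p w' + 2 * multiplicity p v'"
      using arg_cong[OF assms(5), of "multiplicity p"] p nz assms(3,4)
      by (simp add: prime_elem_multiplicity_mult_distrib prime_elem_multiplicity_power_distrib)
    moreover have "multiplicity p w \<le> 1" "multiplicity p w' \<le> 1"
      using assms(1,2) nz p squarefree_factorial_semiring'' by auto
    ultimately show ?thesis by presburger
  qed
  note mult_eq = this
  have "normalize w = normalize w'"
    by (rule multiplicity_eq_imp_eq) (use nz mult_eq in auto)
  moreover have "normalize v = normalize v'"
    by (rule multiplicity_eq_imp_eq) (use assms(3,4) mult_eq in auto)
  ultimately show ?thesis by simp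
qed

lemma squarefree_mult_square_dvd_square:
  fixes w v a :: nat
  assumes "squarefree w" "v > 0" "a > 0" "w * v\<^sup>2 dvd a\<^sup>2"
  shows "w * v dvd a"
proof (rule multiplicity_le_imp_dvd)
  have w: "w \<noteq> 0" using assms(1) squarefree_imp_pos by blast
  then show "w * v \<noteq> 0" using assms(2) by simp
  fix p :: nat assume p: "prime p"
  have "multiplicity p (w * v\<^sup>2) \<le> multiplicity p (a\<^sup>2)"
    using assms w by (intro dvd_imp_multiplicity_le) auto
  then have "multiplicity p w + 2 * multiplicity p v \<le> 2 * multiplicity p a"
    using p w assms by (simp add: prime_elem_multiplicity_mult_distrib prime_elem_multiplicity_power_distrib)
  moreover have "multiplicity p w \<le> 1" using assms(1) w p squarefree_factorial_semiring'' by auto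
  ultimately show "multiplicity p (w * v) \<le> multiplicity p a"
    using p w assms by (simp add: prime_elem_multiplicity_mult_distrib)
qed

lemma squarefree_square_decomposition_exists:
  fixes n :: nat
  assumes "n > 0"
  obtains w v where "squarefree w" "v > 0" "n = w * v\<^sup>2"
proof
  show "squarefree (squarefree_part n)" by simp
  show "square_part n > 0" using assms by (metis neq0_conv square_part_0_iff)
  show "n = squarefree_part n * (square_part n)\<^sup>2" by (rule squarefree_decompose)
qed

lemma bij_betw_squarefree_times_square:
  "bij_betw (\<lambda>(w, t). w * t\<^sup>2) ({w::nat. squarefree w} \<times> {0<..}) {0<..}"
proof (rule bij_betwI')
  fix x y :: "nat \<times> nat"
  assume "x \<in> {w. squarefree w} \<times> {0<..}" "y \<in> {w. squarefree w} \<times> {0<..}"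
  moreover obtain w t w' t' where "x = (w, t)" "y = (w', t')" by (metis prod.exhaust)
  ultimately show "((\<lambda>(w, t). w * t\<^sup>2) x = (\<lambda>(w, t). w * t\<^sup>2) y) = (x = y)"
    using squarefree_square_decomposition_unique[of w w' t t'] by auto
next
  fix x :: "nat \<times> nat" assume "x \<in> {w. squarefree w} \<times> {0<..}"
  then show "(\<lambda>(w, t). w * t\<^sup>2) x \<in> {0<..}" by (auto dest: squarefree_imp_pos)
next
  fix n :: nat assume "n \<in> {0<..}"
  then have "n > 0" by simp
  then obtain w v where "squarefree w" "v > 0" "n = w * v\<^sup>2"
    by (rule squarefree_square_decomposition_exists)
  then show "\<exists>x\<in>{w. squarefree w} \<times> {0<..}. n = (\<lambda>(w, t). w * t\<^sup>2) x"
    by (intro bexI[of _ "(w, v)"]) auto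
qed

section \<open>Parametrising the subrings\<close>

text \<open>With \<open>\<gamma> = w v\<^sup>2\<close>, \<open>w\<close> squarefree, the condition \<open>\<gamma> dvd \<alpha>\<^sup>2\<close> becomes \<open>w v dvd \<alpha>\<close>,
  i.e. \<open>\<alpha> = u v w\<close>.\<close>
definition subring_params :: "(nat \<times> nat \<times> nat) set" where
  "subring_params = {(u, v, w). u > 0 \<and> v > 0 \<and> squarefree w}"

fun hnf_offsets :: "nat \<times> nat \<times> nat \<Rightarrow> nat set" where
  "hnf_offsets (u, v, w) = {..<w * v\<^sup>2}"

fun subring_of :: "(nat \<times> nat \<times> nat) \<times> nat \<Rightarrow> relt set" where
  "subring_of ((u, v, w), \<beta>) = hnf_lattice (int (u * v * w)) (int \<beta>) (int (w * v\<^sup>2))"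

lemma subring_of_params:
  assumes "(u, v, w) \<in> subring_params"
  shows "is_subring (subring_of ((u, v, w), \<beta>))"
    and "rindex (subring_of ((u, v, w), \<beta>)) = u * v ^ 3 * w\<^sup>2"
proof -
  have "u * v * w > 0" "w * v\<^sup>2 > 0"
    using assms unfolding subring_params_def by (auto dest: squarefree_imp_pos)
  then have pos: "int (u * v * w) > 0" "int (w * v\<^sup>2) > 0"
    by (simp_all only: of_nat_0_less_iff)
  have "w * v\<^sup>2 dvd (u * v * w)\<^sup>2"
    by (rule dvdI[of _ _ "u\<^sup>2 * w"]) (simp add: power2_eq_square algebra_simps)
  then have "int (w * v\<^sup>2) dvd (int (u * v * w))\<^sup>2"
    by (metis of_nat_dvd_iff of_nat_power)
  then show "is_subring (subring_of ((u, v, w), \<beta>))"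
    using is_subring_hnf_lattice_iff[OF pos] by simp
  show "rindex (subring_of ((u, v, w), \<beta>)) = u * v ^ 3 * w\<^sup>2"
    unfolding subring_of.simps rindex_hnf_lattice(1)[OF pos] nat_int
    by (simp add: power2_eq_square power3_eq_cube)
qed

lemma inj_on_subring_of: "inj_on subring_of (Sigma subring_params hnf_offsets)"
proof (rule inj_onI)
  fix x y assume x: "x \<in> Sigma subring_params hnf_offsets" and y: "y \<in> Sigma subring_params hnf_offsets"
    and eq: "subring_of x = subring_of y"
  obtain u v w \<beta> u' v' w' \<beta>' where xy: "x = ((u, v, w), \<beta>)" "y = ((u', v', w'), \<beta>')"
    by (metis prod.exhaust)
  from x y have params: "(u, v, w) \<in> subring_params" "(u', v', w') \<in> subring_params"
    and "\<beta> < w * v\<^sup>2" "\<beta>' < w' * v'\<^sup>2"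
    unfolding xy by auto
  then have "u * v * w > 0" "u' * v' * w' > 0"
    unfolding subring_params_def by (auto dest: squarefree_imp_pos)
  with \<open>\<beta> < w * v\<^sup>2\<close> \<open>\<beta>' < w' * v'\<^sup>2\<close>
  have "int (u * v * w) > 0" "int \<beta> < int (w * v\<^sup>2)" "int (u' * v' * w') > 0"
    "int \<beta>' < int (w' * v'\<^sup>2)"
    by (simp_all only: of_nat_0_less_iff of_nat_less_iff)
  from hnf_lattice_inject[OF this(1) _ this(2,3) _ this(4)] eq
  have "u * v * w = u' * v' * w'" "\<beta> = \<beta>'" "w * v\<^sup>2 = w' * v'\<^sup>2"
    unfolding xy by (simp_all only: subring_of.simps of_nat_eq_iff of_nat_0_le_iff simp_thms)
  moreover from this(3) params have "w = w' \<and> v = v'"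
    unfolding subring_params_def by (intro squarefree_square_decomposition_unique) auto
  moreover from params have "v * w > 0" unfolding subring_params_def by (auto dest: squarefree_imp_pos)
  ultimately show "x = y" unfolding xy by auto
qed

lemma subring_in_image_subring_of:
  assumes "is_subring S"
  shows "S \<in> subring_of ` Sigma subring_params hnf_offsets"
proof -
  obtain \<alpha> \<beta> \<gamma> where hnf: "\<alpha> > 0" "\<gamma> > 0" "0 \<le> \<beta>" "\<beta> < \<gamma>" "S = hnf_lattice \<alpha> \<beta> \<gamma>"
    using subring_eq_hnf_lattice[OF assms] .
  from assms have "is_subring (hnf_lattice \<alpha> \<beta> \<gamma>)" unfolding hnf(5) .
  then have "\<gamma> dvd \<alpha>\<^sup>2" using is_subring_hnf_lattice_iff[OF hnf(1,2)] by simp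
  define a b g where "a = nat \<alpha>" and "b = nat \<beta>" and "g = nat \<gamma>"
  with hnf(1-3) have abg: "\<alpha> = int a" "\<beta> = int b" "\<gamma> = int g" by simp_all
  with hnf have "a > 0" "g > 0" "b < g" by simp_all
  from \<open>\<gamma> dvd \<alpha>\<^sup>2\<close> have "g dvd a\<^sup>2" unfolding abg by (simp flip: of_nat_power)
  obtain w v where wv: "squarefree w" "v > 0" "g = w * v\<^sup>2"
    using squarefree_square_decomposition_exists[OF \<open>g > 0\<close>] .
  with \<open>g dvd a\<^sup>2\<close> \<open>a > 0\<close> have "w * v dvd a"
    using squarefree_mult_square_dvd_square[of w v a] by simp
  then obtain u where u: "a = w * v * u" by (elim dvdE)
  with \<open>a > 0\<close> have "u > 0" by (cases u) simp_all
  with wv \<open>b < g\<close> have "((u, v, w), b) \<in> Sigma subring_params hnf_offsets"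
    unfolding subring_params_def by simp
  moreover have "S = subring_of ((u, v, w), b)"
    unfolding hnf(5) abg u wv(3) subring_of.simps by (simp add: mult_ac)
  ultimately show ?thesis by (rule rev_image_eqI)
qed

lemma bij_betw_subring_of:
  "bij_betw subring_of (Sigma subring_params hnf_offsets) {S. is_subring S}"
  unfolding bij_betw_def using inj_on_subring_of subring_in_image_subring_of subring_of_params(1)
  by fastforce

section \<open>Dirichlet series\<close>

lemma of_nat_mult_powr: "(of_nat (m * n) :: complex) powr z = of_nat m powr z * of_nat n powr z"
  by (simp add: powr_times_real)

lemma of_nat_power_powr: "(of_nat (n ^ k) :: complex) powr z = (of_nat n powr z) ^ k"
proof (induction k)
  case (Suc k)
  have "(of_nat (n ^ Suc k) :: complex) powr z = of_nat (n * n ^ k) powr z" by simp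
  also have "\<dots> = of_nat n powr z * of_nat (n ^ k) powr z" by (rule of_nat_mult_powr)
  finally show ?case by (simp only: Suc.IH power_Suc)
qed simp

lemma of_nat_powr_affine:
  assumes "n > 0"
  shows "(of_nat n :: complex) powr (of_nat k + of_nat j * z) = of_nat n ^ k * (of_nat n powr z) ^ j"
proof -
  have n: "(of_nat n :: complex) \<noteq> 0" using assms by simp
  have "(of_nat n :: complex) powr (of_nat k + of_nat j * z)
      = exp (of_nat k * Ln (of_nat n)) * exp (of_nat j * (z * Ln (of_nat n)))"
    using n by (simp add: powr_def exp_add algebra_simps)
  also have "\<dots> = exp (Ln (of_nat n)) ^ k * exp (z * Ln (of_nat n)) ^ j"
    by (simp only: exp_of_nat_mult)
  also have "\<dots> = of_nat n ^ k * (of_nat n powr z) ^ j"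
    using n by (simp add: powr_def del: Ln_of_nat)
  finally show ?thesis .
qed

lemma norm_of_nat_powr: "norm ((of_nat n :: complex) powr z) = real n powr Re z"
  by (subst norm_powr_real_powr) auto

lemma has_sum_pos_nat_iff: "((\<lambda>n. f (Suc n)) has_sum S) UNIV \<longleftrightarrow> (f has_sum S) {0<..}"
  by (rule has_sum_reindex_bij_witness[of _ "\<lambda>n. n - 1" Suc]) auto

lemma rzeta_has_sum:
  assumes "Re x > 1"
  shows "((\<lambda>n. (of_nat n :: complex) powr (- x)) has_sum rzeta x) {0<..}"
proof -
  have "summable (\<lambda>n. real (Suc n) powr (- Re x))"
    using assms by (subst summable_Suc_iff) (simp add: summable_real_powr_iff)
  then have "summable (\<lambda>n. norm ((of_nat (Suc n) :: complex) powr (- x)))"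
    by (simp only: norm_of_nat_powr uminus_complex.sel)
  moreover from this have "(\<lambda>n. (of_nat (Suc n) :: complex) powr (- x)) sums rzeta x"
    unfolding rzeta_def by (rule summable_sums[OF summable_norm_cancel])
  ultimately show ?thesis
    unfolding has_sum_pos_nat_iff[symmetric] by (rule norm_summable_imp_has_sum)
qed

text \<open>\<open>|\<zeta>(x) - 1| \<le> \<zeta>(2) - 1 = \<pi>\<^sup>2/6 - 1 < 1\<close>.\<close>
lemma rzeta_nonzero:
  assumes "Re x \<ge> 2"
  shows "rzeta x \<noteq> 0"
proof -
  have "((\<lambda>n. 1 / real ((Suc n)\<^sup>2)) has_sum pi\<^sup>2 / 6) UNIV"
    using inverse_squares_sums by (intro sums_nonneg_imp_has_sum) simp_all
  also have "(\<lambda>n. 1 / real ((Suc n)\<^sup>2)) = (\<lambda>n. real (Suc n) powr (-2))"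
    by (simp add: powr_minus powr_realpow divide_inverse)
  finally have "((\<lambda>n. real n powr (-2)) has_sum pi\<^sup>2 / 6) {0<..}"
    using has_sum_pos_nat_iff[of "\<lambda>n. real n powr (-2)"] by simp
  from has_sum_Diff[OF this has_sum_finite[of "{1}"]]
  have basel: "((\<lambda>n. real n powr (-2)) has_sum pi\<^sup>2 / 6 - 1) ({0<..} - {1})" by simp
  from assms have "Re x > 1" by simp
  from has_sum_Diff[OF rzeta_has_sum[OF this] has_sum_finite[of "{1}"]]
  have "((\<lambda>n. (of_nat n :: complex) powr (- x)) has_sum rzeta x - 1) ({0<..} - {1})" by simp
  then have "norm (rzeta x - 1) \<le> pi\<^sup>2 / 6 - 1"
  proof (rule norm_infsum_le[OF _ basel])
    fix n :: nat assume "n \<in> {0<..} - {1}"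
    then show "norm ((of_nat n :: complex) powr (- x)) \<le> real n powr (-2)"
      unfolding norm_of_nat_powr using assms by (intro powr_mono) auto
  qed
  moreover have "pi * pi \<le> 3.2 * 3.2"
    using pi_approx(2) pi_gt_zero by (intro mult_mono) auto
  then have "pi\<^sup>2 / 6 - 1 < 1" by (simp add: power2_eq_square)
  ultimately show ?thesis by auto
qed

lemma has_sum_product:
  fixes f :: "'a \<Rightarrow> complex" and g :: "'b \<Rightarrow> complex"
  assumes f: "(f has_sum a) A" and g: "(g has_sum b) B"
  shows "((\<lambda>(x, y). f x * g y) has_sum a * b) (A \<times> B)"
proof (rule has_sum_SigmaI[where g = "\<lambda>x. f x * b"])
  show "((\<lambda>y. (\<lambda>(x, y). f x * g y) (x, y)) has_sum f x * b) B" for x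
    using has_sum_cmult_right[OF g] by simp
  show "((\<lambda>x. f x * b) has_sum a * b) A" using has_sum_cmult_left[OF f] .
  obtain NB where NB: "((\<lambda>y. norm (g y)) has_sum NB) B"
    using has_sum_imp_summable[OF g] summable_on_iff_abs_summable_on_complex
    unfolding summable_on_def by blast
  have "(\<lambda>z. norm ((\<lambda>(x, y). f x * g y) z)) summable_on A \<times> B"
  proof (rule summable_on_SigmaI[where g = "\<lambda>x. norm (f x) * NB"])
    show "((\<lambda>y. norm ((\<lambda>(x, y). f x * g y) (x, y))) has_sum norm (f x) * NB) B" for x
      using has_sum_cmult_right[OF NB, of "norm (f x)"] by (simp add: norm_mult)
    have "(\<lambda>x. norm (f x)) summable_on A"
      using has_sum_imp_summable[OF f] summable_on_iff_abs_summable_on_complex by blast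
    then show "(\<lambda>x. norm (f x) * NB) summable_on A" by (rule summable_on_cmult_left)
  qed auto
  then show "(\<lambda>(x, y). f x * g y) summable_on A \<times> B"
    using summable_on_iff_abs_summable_on_complex by blast
qed

lemma has_sum_Sigma_finite_fibres:
  fixes f :: "'a \<Rightarrow> complex"
  assumes "\<And>x. x \<in> A \<Longrightarrow> finite (B x)" "((\<lambda>x. of_nat (card (B x)) * f x) has_sum T) A"
  shows "((\<lambda>(x, y). f x) has_sum T) (Sigma A B)"
proof (rule has_sum_SigmaI[OF _ assms(2)])
  show "((\<lambda>y. (\<lambda>(x, y). f x) (x, y)) has_sum of_nat (card (B x)) * f x) (B x)" if "x \<in> A" for x
    using assms(1)[OF that] by (intro has_sum_finiteI) simp_all
  have "(\<lambda>z. norm ((\<lambda>(x, y). f x) z)) summable_on Sigma A B"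
  proof (rule summable_on_SigmaI[where g = "\<lambda>x. norm (of_nat (card (B x)) * f x)"])
    show "((\<lambda>y. norm ((\<lambda>(x, y). f x) (x, y))) has_sum norm (of_nat (card (B x)) * f x)) (B x)"
      if "x \<in> A" for x
      using assms(1)[OF that] by (intro has_sum_finiteI) (simp_all add: norm_mult)
    show "(\<lambda>x. norm (of_nat (card (B x)) * f x)) summable_on A"
      by (rule summable_on_iff_abs_summable_on_complex[THEN iffD1, OF has_sum_imp_summable[OF assms(2)]])
  qed auto
  then show "(\<lambda>(x, y). f x) summable_on Sigma A B"
    using summable_on_iff_abs_summable_on_complex by blast
qed

lemma has_sum_geometric:
  fixes z :: complex
  assumes "norm z < 1"
  shows "((\<lambda>n. z ^ n) has_sum 1 / (1 - z)) UNIV"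
  using assms by (intro norm_summable_imp_has_sum)
    (simp_all add: norm_power summable_geometric geometric_sums flip: divide_inverse)

text \<open>Every positive integer is uniquely \<open>w t\<^sup>2\<close> with \<open>w\<close> squarefree, so \<open>\<zeta>(x)\<close> factors as
  the squarefree series times \<open>\<zeta>(2x)\<close>.\<close>
lemma squarefree_rzeta_has_sum:
  assumes "Re x > 1"
  shows "((\<lambda>n. (of_nat n :: complex) powr (- x)) has_sum rzeta x / rzeta (2 * x)) {n. squarefree n}"
proof -
  let ?f = "\<lambda>n. (of_nat n :: complex) powr (- x)"
  have "{n::nat. squarefree n} \<subseteq> {0<..}" using squarefree_imp_pos by auto
  then obtain Q where Q: "(?f has_sum Q) {n. squarefree n}"
    using summable_on_subset_banach[OF has_sum_imp_summable[OF rzeta_has_sum[OF assms]]]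
    unfolding summable_on_def by blast
  have "((\<lambda>(w, t). ?f w * of_nat t powr (- (2 * x))) has_sum Q * rzeta (2 * x))
      ({n. squarefree n} \<times> {0<..})"
    using has_sum_product[OF Q rzeta_has_sum[of "2 * x"]] assms by simp
  also have "?this \<longleftrightarrow> ((\<lambda>(w, t). ?f (w * t\<^sup>2)) has_sum Q * rzeta (2 * x)) ({n. squarefree n} \<times> {0<..})"
  proof (rule has_sum_cong)
    fix z assume "z \<in> {n::nat. squarefree n} \<times> {0::nat<..}"
    then obtain w t where z: "z = (w, t)" "t > 0" by auto
    then have "(of_nat t :: complex) powr (- (2 * x)) = (of_nat t powr (- x))\<^sup>2"
      using of_nat_powr_affine[of t 0 2 "- x"] by simp
    then show "(\<lambda>(w, t). ?f w * of_nat t powr (- (2 * x))) z = (\<lambda>(w, t). ?f (w * t\<^sup>2)) z"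
      unfolding z(1) prod.case by (simp only: of_nat_mult_powr of_nat_power_powr)
  qed
  also have "\<dots> \<longleftrightarrow> (?f has_sum Q * rzeta (2 * x)) {0<..}"
    using has_sum_reindex_bij_betw[OF bij_betw_squarefree_times_square, of ?f]
    by (simp add: case_prod_unfold)
  finally have "rzeta x = Q * rzeta (2 * x)"
    using has_sum_unique rzeta_has_sum[OF assms] by blast
  moreover have "rzeta (2 * x) \<noteq> 0" using assms by (intro rzeta_nonzero) simp
  ultimately show ?thesis using Q by simp
qed

section \<open>The zeta function of \<open>\<int>[t]/(t\<^sup>3)\<close>\<close>

lemma subring_weight:
  fixes s :: complex
  assumes "v > 0" "w > 0"
  shows "of_nat (w * v\<^sup>2) * of_nat (u * v ^ 3 * w\<^sup>2) powr (- s)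
    = of_nat u powr (- s) * of_nat v powr (- (3 * s - 2)) * of_nat w powr (- (2 * s - 1))"
proof -
  have "of_nat v powr (- (3 * s - 2)) = of_nat v ^ 2 * (of_nat v powr (- s)) ^ 3"
    using of_nat_powr_affine[OF assms(1), of 2 3 "- s"] by (simp add: algebra_simps)
  moreover have "of_nat w powr (- (2 * s - 1)) = of_nat w ^ 1 * (of_nat w powr (- s)) ^ 2"
    using of_nat_powr_affine[OF assms(2), of 1 2 "- s"] by (simp add: algebra_simps)
  moreover have "(of_nat (u * v ^ 3 * w\<^sup>2) :: complex) powr (- s)
      = of_nat u powr (- s) * (of_nat v powr (- s)) ^ 3 * (of_nat w powr (- s))\<^sup>2"
    by (simp only: of_nat_mult_powr of_nat_power_powr)
  ultimately show ?thesis by (simp add: power2_eq_square mult_ac)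
qed

lemma subring_params_eq: "subring_params = {0<..} \<times> {0<..} \<times> {w. squarefree w}"
  by (auto simp: subring_params_def)

lemma subring_zeta_has_sum:
  fixes s :: complex
  assumes "((\<lambda>(u, v, w). of_nat u powr (- s) * of_nat v powr (- (3 * s - 2)) * of_nat w powr (- (2 * s - 1)))
      has_sum T) P"
    and "P \<subseteq> subring_params"
  shows "((\<lambda>S. of_nat (rindex S) powr (- s)) has_sum T) (subring_of ` Sigma P hnf_offsets)"
proof -
  let ?idx = "\<lambda>(u, v, w). u * v ^ 3 * w\<^sup>2"
  have "((\<lambda>x. of_nat (card (hnf_offsets x)) * of_nat (?idx x) powr (- s)) has_sum T) P"
  proof (rule has_sum_cong[THEN iffD1, OF _ assms(1)])
    fix x assume "x \<in> P"
    obtain u v w where x: "x = (u, v, w)" by (cases x)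
    with \<open>x \<in> P\<close> assms(2) have "v > 0" "w > 0"
      unfolding subring_params_def by (auto dest: squarefree_imp_pos)
    then show "(\<lambda>(u, v, w). of_nat u powr (- s) * of_nat v powr (- (3 * s - 2)) * of_nat w powr (- (2 * s - 1))) x
        = of_nat (card (hnf_offsets x)) * of_nat (?idx x) powr (- s)"
      unfolding x using subring_weight[OF \<open>v > 0\<close> \<open>w > 0\<close>] by simp
  qed
  then have "((\<lambda>(x, \<beta>). of_nat (?idx x) powr (- s)) has_sum T) (Sigma P hnf_offsets)"
    by (intro has_sum_Sigma_finite_fibres) (auto split: prod.splits)
  also have "?this \<longleftrightarrow> (((\<lambda>S. of_nat (rindex S) powr (- s)) \<circ> subring_of) has_sum T) (Sigma P hnf_offsets)"
  proof (rule has_sum_cong)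
    fix x assume "x \<in> Sigma P hnf_offsets"
    moreover obtain u v w \<beta> where x: "x = ((u, v, w), \<beta>)" by (metis prod.exhaust)
    ultimately have params: "(u, v, w) \<in> subring_params" using assms(2) by auto
    show "(\<lambda>(x, \<beta>). of_nat (?idx x) powr (- s)) x = ((\<lambda>S. of_nat (rindex S) powr (- s)) \<circ> subring_of) x"
      unfolding x o_def prod.case subring_of_params(2)[OF params] by (rule refl)
  qed
  also have "\<dots> \<longleftrightarrow> ?thesis"
    using assms(2) inj_on_subset[OF inj_on_subring_of Sigma_mono]
    by (intro has_sum_reindex[symmetric]) auto
  finally show ?thesis .
qed

theorem subring_zeta_eq:
  fixes s :: complex
  assumes "Re s > 1"
  shows "((\<lambda>S. of_nat (rindex S) powr (- s)) has_sum
      rzeta s * rzeta (2 * s - 1) * rzeta (3 * s - 2) / rzeta (4 * s - 2)) {S. is_subring S}"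
proof -
  have "((\<lambda>(v, w). of_nat v powr (- (3 * s - 2)) * of_nat w powr (- (2 * s - 1)))
      has_sum rzeta (3 * s - 2) * (rzeta (2 * s - 1) / rzeta (2 * (2 * s - 1))))
      ({0<..} \<times> {w. squarefree w})"
    using assms by (intro has_sum_product rzeta_has_sum squarefree_rzeta_has_sum) simp_all
  from has_sum_product[OF rzeta_has_sum[OF assms] this]
  have "((\<lambda>(u, v, w). of_nat u powr (- s) * of_nat v powr (- (3 * s - 2)) * of_nat w powr (- (2 * s - 1)))
      has_sum rzeta s * rzeta (2 * s - 1) * rzeta (3 * s - 2) / rzeta (4 * s - 2)) subring_params"
    unfolding subring_params_eq by (simp add: mult_ac case_prod_unfold algebra_simps)
  from subring_zeta_has_sum[OF this] show ?thesis
    using bij_betw_subring_of by (simp add: bij_betw_def)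
qed

definition local_subring_params :: "nat \<Rightarrow> (nat \<times> nat \<times> nat) set" where
  "local_subring_params p = (\<lambda>(i, j, w). (p ^ i, p ^ j, w)) ` (UNIV \<times> UNIV \<times> {1, p})"

lemma local_subring_params_subset:
  assumes "prime p"
  shows "local_subring_params p \<subseteq> subring_params"
  unfolding local_subring_params_def subring_params_def using assms
  by (auto simp: prime_gt_0_nat squarefree_prime)

lemma index_prime_power_iff:
  fixes p u v w :: nat
  assumes "prime p" "(u, v, w) \<in> subring_params"
  shows "(\<exists>k. u * v ^ 3 * w\<^sup>2 = p ^ k) \<longleftrightarrow> (u, v, w) \<in> local_subring_params p"
proof
  assume "\<exists>k. u * v ^ 3 * w\<^sup>2 = p ^ k"
  then obtain k where k: "u * v ^ 3 * w\<^sup>2 = p ^ k" ..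
  have "u dvd p ^ k" "v dvd p ^ k" "w dvd p ^ k"
    unfolding k[symmetric] by (simp_all add: power2_eq_square power3_eq_cube)
  then obtain i j e where u: "u = p ^ i" and v: "v = p ^ j" and w: "w = p ^ e"
    using divides_primepow_nat[OF assms(1)] by meson
  have "e \<le> 1"
  proof (rule ccontr)
    assume "\<not> e \<le> 1"
    then have "p\<^sup>2 dvd w" unfolding w by (intro le_imp_power_dvd) simp
    with assms have "p dvd 1" unfolding subring_params_def by (auto dest: squarefreeD)
    with assms(1) show False by simp
  qed
  then have "w \<in> {1, p}" unfolding w by (auto simp: le_Suc_eq)
  then show "(u, v, w) \<in> local_subring_params p"
    unfolding local_subring_params_def u v by force
next
  assume "(u, v, w) \<in> local_subring_params p"
  then obtain i j where "u = p ^ i" "v = p ^ j" "w \<in> {1, p}"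
    unfolding local_subring_params_def by auto
  then have "u * v ^ 3 * w\<^sup>2 = p ^ (i + 3 * j + (if w = 1 then 0 else 2))"
    by (auto simp: power_add power_mult mult_ac)
  then show "\<exists>k. u * v ^ 3 * w\<^sup>2 = p ^ k" ..
qed

lemma local_subring_params_has_sum:
  fixes s :: complex
  assumes "prime p" "Re s > 1"
  defines "Z \<equiv> of_nat p powr (- s)"
  shows "((\<lambda>(u, v, w). of_nat u powr (- s) * of_nat v powr (- (3 * s - 2)) * of_nat w powr (- (2 * s - 1)))
      has_sum (1 + of_nat p * Z ^ 2) / ((1 - Z) * (1 - of_nat p ^ 2 * Z ^ 3))) (local_subring_params p)"
proof -
  have p: "p > 1" using assms(1) prime_gt_1_nat by blast
  define W where "W = (of_nat p :: complex) powr (- (3 * s - 2))"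
  have W: "W = of_nat p ^ 2 * Z ^ 3"
    using of_nat_powr_affine[of p 2 3 "- s"] p unfolding W_def Z_def by (simp add: algebra_simps)
  have "norm Z < 1" "norm W < 1"
    unfolding Z_def W_def norm_of_nat_powr using p assms(2) by (simp_all add: powr_less_one)
  moreover have "((\<lambda>w. of_nat w powr (- (2 * s - 1))) has_sum 1 + of_nat p * Z ^ 2) {1, p}"
    using p of_nat_powr_affine[of p 1 2 "- s"] by (intro has_sum_finiteI) (simp_all add: Z_def algebra_simps)
  ultimately have "((\<lambda>(i, j, w). Z ^ i * (W ^ j * of_nat w powr (- (2 * s - 1))))
      has_sum 1 / (1 - Z) * (1 / (1 - W) * (1 + of_nat p * Z ^ 2))) (UNIV \<times> UNIV \<times> {1, p})"
    using has_sum_product[OF has_sum_geometric has_sum_product[OF has_sum_geometric]]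
    by (simp add: case_prod_unfold)
  also have "?this \<longleftrightarrow> (((\<lambda>(u, v, w). of_nat u powr (- s) * of_nat v powr (- (3 * s - 2))
      * of_nat w powr (- (2 * s - 1))) \<circ> (\<lambda>(i, j, w). (p ^ i, p ^ j, w)))
      has_sum 1 / (1 - Z) * (1 / (1 - W) * (1 + of_nat p * Z ^ 2))) (UNIV \<times> UNIV \<times> {1, p})"
  proof (rule has_sum_cong)
    fix x :: "nat \<times> nat \<times> nat"
    obtain i j w where x: "x = (i, j, w)" by (metis prod.exhaust)
    have "of_nat (p ^ i) powr (- s) = Z ^ i" "of_nat (p ^ j) powr (- (3 * s - 2)) = W ^ j"
      unfolding Z_def W_def by (rule of_nat_power_powr)+
    then show "(\<lambda>(i, j, w). Z ^ i * (W ^ j * of_nat w powr (- (2 * s - 1)))) x =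
        ((\<lambda>(u, v, w). of_nat u powr (- s) * of_nat v powr (- (3 * s - 2))
          * of_nat w powr (- (2 * s - 1))) \<circ> (\<lambda>(i, j, w). (p ^ i, p ^ j, w))) x"
      unfolding x o_def prod.case by (simp only: mult.assoc)
  qed
  also have "\<dots> \<longleftrightarrow> ((\<lambda>(u, v, w). of_nat u powr (- s) * of_nat v powr (- (3 * s - 2))
      * of_nat w powr (- (2 * s - 1))) has_sum 1 / (1 - Z) * (1 / (1 - W) * (1 + of_nat p * Z ^ 2)))
      (local_subring_params p)"
    unfolding local_subring_params_def using p
    by (intro has_sum_reindex[symmetric]) (auto simp: inj_on_def power_inject_exp)
  also have "1 / (1 - Z) * (1 / (1 - W) * (1 + of_nat p * Z ^ 2))
      = (1 + of_nat p * Z ^ 2) / ((1 - Z) * (1 - of_nat p ^ 2 * Z ^ 3))"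
    unfolding W by simp
  finally show ?thesis .
qed

lemma image_subring_of_local_subring_params:
  assumes "prime p"
  shows "subring_of ` Sigma (local_subring_params p) hnf_offsets = {S. is_subring S \<and> (\<exists>k. rindex S = p ^ k)}"
proof -
  note params = local_subring_params_subset[OF assms]
  have "subring_of ` Sigma (local_subring_params p) hnf_offsets =
      subring_of ` {x \<in> Sigma subring_params hnf_offsets. \<exists>k. rindex (subring_of x) = p ^ k}"
  proof (rule arg_cong[where f = "image subring_of"], rule set_eqI)
    fix x :: "(nat \<times> nat \<times> nat) \<times> nat"
    obtain u v w \<beta> where x: "x = ((u, v, w), \<beta>)" by (metis prod.exhaust)
    show "x \<in> Sigma (local_subring_params p) hnf_offsets \<longleftrightarrow>
        x \<in> {x \<in> Sigma subring_params hnf_offsets. \<exists>k. rindex (subring_of x) = p ^ k}"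
    proof (cases "(u, v, w) \<in> subring_params")
      case True
      then show ?thesis
        unfolding x using index_prime_power_iff[OF assms True] subring_of_params(2)[OF True] by auto
    qed (use params x in auto)
  qed
  also have "\<dots> = {S \<in> subring_of ` Sigma subring_params hnf_offsets. \<exists>k. rindex S = p ^ k}"
    by auto
  also have "\<dots> = {S. is_subring S \<and> (\<exists>k. rindex S = p ^ k)}"
    using bij_betw_imp_surj_on[OF bij_betw_subring_of] by simp
  finally show ?thesis .
qed

theorem local_subring_zeta_eq:
  fixes s :: complex
  assumes "prime p" "Re s > 1"
  shows "((\<lambda>S. of_nat (rindex S) powr (- s)) has_sum
      (let Z = of_nat p powr (- s) in (1 + of_nat p * Z ^ 2) / ((1 - Z) * (1 - of_nat p ^ 2 * Z ^ 3))))
      {S. is_subring S \<and> (\<exists>k. rindex S = p ^ k)}"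
  using subring_zeta_has_sum[OF local_subring_params_has_sum[OF assms] local_subring_params_subset[OF assms(1)]]
  unfolding image_subring_of_local_subring_params[OF assms(1)] Let_def .

theorem corollary5:
  fixes s :: complex
  assumes "Re s > 1"
  shows "(\<forall>p::nat. prime p \<longrightarrow>
            ((\<lambda>S. of_nat (rindex S) powr (- s)) has_sum
               (let Z = of_nat p powr (- s)
                in (1 + of_nat p * Z ^ 2) / ((1 - Z) * (1 - of_nat p ^ 2 * Z ^ 3))))
            {S. is_subring S \<and> (\<exists>k. rindex S = p ^ k)})
       \<and> ((\<lambda>S. of_nat (rindex S) powr (- s)) has_sum
             (rzeta s * rzeta (2 * s - 1) * rzeta (3 * s - 2) / rzeta (4 * s - 2)))
           {S. is_subring S}"
  using local_subring_zeta_eq[OF _ assms] subring_zeta_eq[OF assms] by blast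

end
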